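(* Let $M$ be a strong module of a CPT poset $\mathbf{P}=(X,P)$, and let $\{W_x\}_{x\in X}$ be a CPT representation of $\mathbf{P}$ on a host tree $T$ in which some element $z\in M$ is represented by a trivial path $W_z=\{a\}$, $a$ a vertex of $T$. If $x\in X\setminus M$ and $W_x$ contains the vertex $a$, then $W_x$ contains $W_m$ for every $m\in M$.
   Context: A CPT representation of a poset $\mathbf{P}=(X,P)$ assigns to each $x\in X$ a path $W_x$ (vertex set) of a host tree $T$ so that $x<y$ iff $W_x\subsetneq W_y$. A set $M\subseteq X$ is a module if every $y\notin M$ is comparable to all elements of $M$ or incomparable to all of them; it is strong if for every module $M'$, $M\cap M'=\emptyset$ or $M\subseteq M'$ or $M'\subseteq M$. A trivial path consists of a single vertex. *)

theory Defs
  imports Main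
begin

definition simple_graph :: "'v set \<Rightarrow> ('v \<Rightarrow> 'v \<Rightarrow> bool) \<Rightarrow> bool" where
  "simple_graph V E \<longleftrightarrow> finite V \<and> (\<forall>u v. E u v \<longrightarrow> u \<in> V \<and> v \<in> V)
     \<and> (\<forall>u v. E u v \<longrightarrow> E v u) \<and> (\<forall>u. \<not> E u u)"

definition is_walk :: "'v set \<Rightarrow> ('v \<Rightarrow> 'v \<Rightarrow> bool) \<Rightarrow> 'v list \<Rightarrow> bool" where
  "is_walk V E ps \<longleftrightarrow> ps \<noteq> [] \<and> set ps \<subseteq> V \<and> (\<forall>i. Suc i < length ps \<longrightarrow> E (ps ! i) (ps ! Suc i))"

definition is_path :: "'v set \<Rightarrow> ('v \<Rightarrow> 'v \<Rightarrow> bool) \<Rightarrow> 'v list \<Rightarrow> bool" where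
  "is_path V E ps \<longleftrightarrow> is_walk V E ps \<and> distinct ps"

definition is_cycle :: "'v set \<Rightarrow> ('v \<Rightarrow> 'v \<Rightarrow> bool) \<Rightarrow> 'v list \<Rightarrow> bool" where
  "is_cycle V E ps \<longleftrightarrow> is_path V E ps \<and> length ps \<ge> 3 \<and> E (last ps) (hd ps)"

definition connected_graph :: "'v set \<Rightarrow> ('v \<Rightarrow> 'v \<Rightarrow> bool) \<Rightarrow> bool" where
  "connected_graph V E \<longleftrightarrow> (\<forall>u\<in>V. \<forall>v\<in>V. \<exists>ps. is_walk V E ps \<and> hd ps = u \<and> last ps = v)"

definition is_tree :: "'v set \<Rightarrow> ('v \<Rightarrow> 'v \<Rightarrow> bool) \<Rightarrow> bool" where
  "is_tree V E \<longleftrightarrow> simple_graph V E \<and> V \<noteq> {} \<and> connected_graph V E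
     \<and> (\<nexists>ps. is_cycle V E ps)"

definition path_vertex_set :: "'v set \<Rightarrow> ('v \<Rightarrow> 'v \<Rightarrow> bool) \<Rightarrow> 'v set \<Rightarrow> bool" where
  "path_vertex_set V E W \<longleftrightarrow> (\<exists>ps. is_path V E ps \<and> set ps = W)"

definition strict_poset :: "'a set \<Rightarrow> ('a \<Rightarrow> 'a \<Rightarrow> bool) \<Rightarrow> bool" where
  "strict_poset X lt \<longleftrightarrow> finite X
     \<and> (\<forall>x\<in>X. \<not> lt x x)
     \<and> (\<forall>x\<in>X. \<forall>y\<in>X. \<forall>z\<in>X. lt x y \<longrightarrow> lt y z \<longrightarrow> lt x z)"

definition cpt_rep :: "'a set \<Rightarrow> ('a \<Rightarrow> 'a \<Rightarrow> bool) \<Rightarrow> 'v set \<Rightarrow> ('v \<Rightarrow> 'v \<Rightarrow> bool)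
    \<Rightarrow> ('a \<Rightarrow> 'v set) \<Rightarrow> bool" where
  "cpt_rep X lt V E W \<longleftrightarrow> is_tree V E
     \<and> (\<forall>x\<in>X. path_vertex_set V E (W x))
     \<and> (\<forall>x\<in>X. \<forall>y\<in>X. lt x y \<longleftrightarrow> W x \<subset> W y)"

definition comparable :: "('a \<Rightarrow> 'a \<Rightarrow> bool) \<Rightarrow> 'a \<Rightarrow> 'a \<Rightarrow> bool" where
  "comparable lt x y \<longleftrightarrow> lt x y \<or> lt y x"

definition is_module :: "'a set \<Rightarrow> ('a \<Rightarrow> 'a \<Rightarrow> bool) \<Rightarrow> 'a set \<Rightarrow> bool" where
  "is_module X lt M \<longleftrightarrow> M \<subseteq> X \<and>
     (\<forall>y\<in>X - M. (\<forall>m\<in>M. comparable lt y m) \<or> (\<forall>m\<in>M. \<not> comparable lt y m))"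

definition strong_module :: "'a set \<Rightarrow> ('a \<Rightarrow> 'a \<Rightarrow> bool) \<Rightarrow> 'a set \<Rightarrow> bool" where
  "strong_module X lt M \<longleftrightarrow> is_module X lt M \<and>
     (\<forall>M'. is_module X lt M' \<longrightarrow> M \<inter> M' = {} \<or> M \<subseteq> M' \<or> M' \<subseteq> M)"

end

theory Submission
  imports Defs
begin

(* If W x = {a} = W z, then x and z are twins, so {x, z} is a module and strongness
   forces M = {z}. Otherwise W z is a proper subset of W x, i.e. z < x, and a purely
   order-theoretic fact finishes the proof: an element outside a strong module M that lies
   above one element of M lies above all of them. For if x were also below some u in M, the
   elements of M below x together with the elements outside M squeezed between the two
   parts of M would form a module that overlaps M without being comparable to it under
   inclusion. *)

lemma cpt_rep_less_iff:
  assumes "cpt_rep X lt V E W" and "x \<in> X" and "y \<in> X"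
  shows "lt x y \<longleftrightarrow> W x \<subset> W y"
  using assms unfolding cpt_rep_def by blast

lemma cpt_rep_equal_paths_module:
  assumes rep: "cpt_rep X lt V E W" and "x \<in> X" and "z \<in> X" and "W x = W z"
  shows "is_module X lt {x, z}"
  unfolding is_module_def
proof (intro conjI ballI)
  show "{x, z} \<subseteq> X" using assms by blast
next
  fix y assume "y \<in> X - {x, z}"
  then have "comparable lt y x \<longleftrightarrow> comparable lt y z"
    unfolding comparable_def using assms cpt_rep_less_iff[OF rep] by auto
  then show "(\<forall>m\<in>{x, z}. comparable lt y m) \<or> (\<forall>m\<in>{x, z}. \<not> comparable lt y m)"
    by auto
qed

definition module_cut :: "'a set \<Rightarrow> ('a \<Rightarrow> 'a \<Rightarrow> bool) \<Rightarrow> 'a set \<Rightarrow> 'a \<Rightarrow> 'a set" where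
  "module_cut X lt M x = {v \<in> M. lt v x} \<union>
     {v \<in> X - M. (\<forall>d\<in>M. lt d x \<longrightarrow> lt d v) \<and> (\<forall>u\<in>M. lt x u \<longrightarrow> lt v u)}"

lemma is_module_module_cut:
  assumes poset: "strict_poset X lt" and module: "is_module X lt M" and x: "x \<in> X - M"
    and "d \<in> M" and "lt d x" and "u \<in> M" and "lt x u"
  shows "is_module X lt (module_cut X lt M x)"
proof -
  let ?C = "module_cut X lt M x"
  have MX: "M \<subseteq> X" using module unfolding is_module_def by blast
  have trans: "\<And>p q r. p \<in> X \<Longrightarrow> q \<in> X \<Longrightarrow> r \<in> X \<Longrightarrow> lt p q \<Longrightarrow> lt q r \<Longrightarrow> lt p r"
    using poset unfolding strict_poset_def by blast
  have uniform: "(\<forall>m\<in>M. comparable lt y m) \<or> (\<forall>m\<in>M. \<not> comparable lt y m)" if "y \<in> X - M" for y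
    using module that unfolding is_module_def by blast
  have x_comparable: "\<forall>m\<in>M. comparable lt x m"
    using uniform[OF x] \<open>d \<in> M\<close> \<open>lt d x\<close> unfolding comparable_def by blast
  have CX: "?C \<subseteq> X" using MX unfolding module_cut_def by blast
  have above_C: "\<forall>v\<in>?C. comparable lt y v" if "y \<in> M" "y \<notin> ?C" for y
  proof -
    have "lt x y" using that x_comparable unfolding module_cut_def comparable_def by blast
    then show ?thesis
      using that x MX CX trans[of _ x y] unfolding module_cut_def comparable_def by blast
  qed
  have comparable_to_C: "\<forall>v\<in>?C. comparable lt y v"
    if "y \<in> X - M" "y \<notin> ?C" "\<forall>m\<in>M. comparable lt y m" for y
  proof
    fix v assume v: "v \<in> ?C"
    have "(\<exists>d'\<in>M. lt d' x \<and> lt y d') \<or> (\<exists>u'\<in>M. lt x u' \<and> lt u' y)"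
      using that unfolding module_cut_def comparable_def by blast
    then show "comparable lt y v"
    proof (elim disjE bexE conjE)
      fix d' assume "d' \<in> M" "lt d' x" "lt y d'"
      then show ?thesis
        using v that MX CX trans[of y d' v] trans[of v x d']
        unfolding module_cut_def comparable_def by blast
    next
      fix u' assume "u' \<in> M" "lt x u'" "lt u' y"
      then show ?thesis
        using v that MX CX trans[of v u' y] trans[of u' x v]
        unfolding module_cut_def comparable_def by blast
    qed
  qed
  have incomparable_to_C: "\<forall>v\<in>?C. \<not> comparable lt y v"
    if "y \<in> X - M" "\<forall>m\<in>M. \<not> comparable lt y m" for y
  proof
    fix v assume v: "v \<in> ?C"
    show "\<not> comparable lt y v"
    proof (cases "v \<in> M")
      case False
      then have "lt d v" "lt v u" "v \<in> X"
        using v \<open>d \<in> M\<close> \<open>lt d x\<close> \<open>u \<in> M\<close> \<open>lt x u\<close> unfolding module_cut_def by auto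
      then show ?thesis
        using that \<open>d \<in> M\<close> \<open>u \<in> M\<close> MX trans[of y v u] trans[of d v y]
        unfolding comparable_def by blast
    qed (use that in blast)
  qed
  show ?thesis
    unfolding is_module_def
    using CX above_C comparable_to_C incomparable_to_C uniform by blast
qed

lemma strong_module_above_one_above_all:
  assumes poset: "strict_poset X lt" and strong: "strong_module X lt M"
    and x: "x \<in> X - M" and "z \<in> M" and "lt z x" and "m \<in> M"
  shows "lt m x"
proof -
  have module: "is_module X lt M" using strong unfolding strong_module_def by blast
  have MX: "M \<subseteq> X" using module unfolding is_module_def by blast
  have "comparable lt x m"
    using module x \<open>z \<in> M\<close> \<open>lt z x\<close> \<open>m \<in> M\<close> unfolding is_module_def comparable_def by blast
  moreover have "\<not> lt x m"
  proof
    assume "lt x m"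
    let ?C = "module_cut X lt M x"
    have "is_module X lt ?C"
      using is_module_module_cut[OF poset module x \<open>z \<in> M\<close> \<open>lt z x\<close> \<open>m \<in> M\<close> \<open>lt x m\<close>] .
    moreover have "z \<in> ?C" "x \<in> ?C"
      using x \<open>z \<in> M\<close> \<open>lt z x\<close> unfolding module_cut_def by auto
    moreover have "m \<notin> ?C"
      using poset \<open>lt x m\<close> \<open>m \<in> M\<close> x MX unfolding module_cut_def strict_poset_def by blast
    ultimately show False
      using strong x \<open>z \<in> M\<close> \<open>m \<in> M\<close> unfolding strong_module_def by blast
  qed
  ultimately show "lt m x" unfolding comparable_def by blast
qed

theorem mainTheorem4:
  fixes X :: "'a set" and lt :: "'a \<Rightarrow> 'a \<Rightarrow> bool"
    and V :: "'v set" and E :: "'v \<Rightarrow> 'v \<Rightarrow> bool" and W :: "'a \<Rightarrow> 'v set"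
  assumes "strict_poset X lt"
    and "cpt_rep X lt V E W"
    and "strong_module X lt M"
    and "z \<in> M" and "a \<in> V" and "W z = {a}"
    and "x \<in> X - M" and "a \<in> W x"
  shows "\<forall>m\<in>M. W m \<subseteq> W x"
proof -
  have MX: "M \<subseteq> X" using assms(3) unfolding strong_module_def is_module_def by blast
  show ?thesis
  proof (cases "W x = {a}")
    case True
    then have "is_module X lt {x, z}"
      using cpt_rep_equal_paths_module[OF assms(2)] assms(4,6,7) MX by auto
    then have "M \<subseteq> {z}"
      using assms(3,4,7) unfolding strong_module_def by blast
    then show ?thesis using True assms(6) by auto
  next
    case False
    then have "W z \<subset> W x" using assms(6,8) by auto
    then have "lt z x" using cpt_rep_less_iff[OF assms(2)] assms(4,7) MX by blast
    then show ?thesis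
      using strong_module_above_one_above_all[OF assms(1,3,7,4)]
        cpt_rep_less_iff[OF assms(2)] assms(7) MX by blast
  qed
qed

end
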